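(* Let $d\ge 2$, let $S^{d-1}=\{v\in\mathbb{R}^d:\|v\|=1\}$ and let $n$ be an odd positive integer. Then the map $f:(S^{d-1})^n\to\mathbb{R}^d$, $f(v_1,\dots,v_n)=v_1+\cdots+v_n$, is a fold map.
   Context: For a smooth map $f:X\to Y$ with $\dim X\ge\dim Y$, $S(f)$ denotes the set of points where $D_xf$ is not surjective and $S_k(f)$ the set where $D_xf$ has corank $k$; $S_1$ denotes the submanifold of the first jet space $J^1(X,Y)$ consisting of jets of corank one. $f$ is a fold map if $S(f)=S_1(f)$, $j^1f\pitchfork S_1$, and for every $x\in S_1(f)$ one has $T_xS_1(f)+\ker(D_xf)=T_xX$. *)

theory Defs
  imports "HOL-Analysis.Analysis"
begin

text \<open>Everything is done for embedded submanifolds X of a Euclidean space 'a and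
target Y = R^'d (represented by real^'d).\<close>

definition tangent_space :: "'a::euclidean_space set \<Rightarrow> 'a \<Rightarrow> 'a set" where
  "tangent_space M p = {v. \<exists>\<gamma> e. e > 0 \<and> \<gamma> 0 = p \<and> (\<forall>t\<in>{-e<..<e}. \<gamma> t \<in> M)
      \<and> (\<gamma> has_vector_derivative v) (at 0)}"

definition push_tangent :: "('a::euclidean_space \<Rightarrow> 'b::euclidean_space) \<Rightarrow> 'a set \<Rightarrow> 'a \<Rightarrow> 'b set" where
  "push_tangent g M p = {w. \<exists>\<gamma> e v. e > 0 \<and> \<gamma> 0 = p \<and> (\<forall>t\<in>{-e<..<e}. \<gamma> t \<in> M)
      \<and> (\<gamma> has_vector_derivative v) (at 0) \<and> ((g \<circ> \<gamma>) has_vector_derivative w) (at 0)}"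

text \<open>D_x f : T_xX \<rightarrow> R^d, as the restriction of the ambient derivative.\<close>
definition Dmap :: "('a::euclidean_space \<Rightarrow> real^'d) \<Rightarrow> 'a \<Rightarrow> 'a \<Rightarrow> real^'d" where
  "Dmap f x = frechet_derivative f (at x)"

definition corank_at :: "'a::euclidean_space set \<Rightarrow> ('a \<Rightarrow> real^'d) \<Rightarrow> 'a \<Rightarrow> nat" where
  "corank_at X f x = CARD('d) - dim (Dmap f x ` tangent_space X x)"

definition sing_set :: "'a::euclidean_space set \<Rightarrow> ('a \<Rightarrow> real^'d) \<Rightarrow> 'a set" where
  "sing_set X f = {x\<in>X. Dmap f x ` tangent_space X x \<noteq> UNIV}"

definition Sk_set :: "nat \<Rightarrow> 'a::euclidean_space set \<Rightarrow> ('a \<Rightarrow> real^'d) \<Rightarrow> 'a set" where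
  "Sk_set k X f = {x\<in>X. corank_at X f x = k}"

text \<open>First jet space J^1(X,R^d): a jet (x,y,L) with L : T_xX \<rightarrow> R^d linear, L represented
canonically by the rows A$i \<in> T_xX, L v = (\<chi> i. A$i \<bullet> v).\<close>
definition lin_of :: "'a::euclidean_space^'d \<Rightarrow> 'a \<Rightarrow> real^'d" where
  "lin_of A v = (\<chi> i. A$i \<bullet> v)"

definition J1 :: "'a::euclidean_space set \<Rightarrow> ('a \<times> (real^'d) \<times> ('a^'d)) set" where
  "J1 X = {(x, y, A). x \<in> X \<and> (\<forall>i. A$i \<in> tangent_space X x)}"

definition jet_corank :: "'a::euclidean_space set \<Rightarrow> ('a \<times> (real^'d) \<times> ('a^'d)) \<Rightarrow> nat" where
  "jet_corank X j = (case j of (x, y, A) \<Rightarrow> CARD('d) - dim (lin_of A ` tangent_space X x))"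

definition S1_jets :: "'a::euclidean_space set \<Rightarrow> ('a \<times> (real^'d) \<times> ('a^'d)) set" where
  "S1_jets X = {j \<in> J1 X. jet_corank X j = 1}"

definition jet1 :: "'a::euclidean_space set \<Rightarrow> ('a \<Rightarrow> real^'d) \<Rightarrow> 'a \<Rightarrow> 'a \<times> (real^'d) \<times> ('a^'d)" where
  "jet1 X f x = (x, f x, THE A. (\<forall>i. A$i \<in> tangent_space X x) \<and>
       (\<forall>v\<in>tangent_space X x. lin_of A v = Dmap f x v))"

definition fold_map :: "'a::euclidean_space set \<Rightarrow> ('a \<Rightarrow> real^'d) \<Rightarrow> bool" where
  "fold_map X f \<longleftrightarrow>
     sing_set X f = Sk_set 1 X f
   \<and> (\<forall>x\<in>X. jet1 X f x \<in> S1_jets X \<longrightarrow>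
        {a + b | a b. a \<in> push_tangent (jet1 X f) X x \<and> b \<in> tangent_space (S1_jets X) (jet1 X f x)}
        = tangent_space (J1 X) (jet1 X f x))
   \<and> (\<forall>x\<in>Sk_set 1 X f.
        {a + b | a b. a \<in> tangent_space (Sk_set 1 X f) x \<and>
                       b \<in> {v \<in> tangent_space X x. Dmap f x v = 0}}
        = tangent_space X x)"

end

theory Submission
  imports Defs
begin

text \<open>
  The tangent space of the product of spheres X at x is {v. x_k \<bottom> v_k for all k}, and the
  differential of the sum map f is the sum itself. Its image contains every hyperplane
  x_k^\<bottom>, so the corank is at most one, with equality exactly when all these hyperplanes
  coincide, i.e. when x_k = \<plusminus>u for one unit vector u. Such configurations form S_1(f); moving u
  along a tangent vector a gives the tangent vector (\<epsilon>_k a)_k of S_1(f), whose image is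
  (\<Sum>\<epsilon>_k) a with \<Sum>\<epsilon>_k \<noteq> 0 because n is odd; this gives T_xS_1(f) + ker D_xf = T_xX.

  Along a curve
  of jets with \<Sum>u_i A_i = 0 (vanishing u-contraction) the corank stays at least one, while for small
  times the rank stays at least d - 1, since a small perturbation of a map injective on a
  hyperplane stays injective; so the curve runs in S_1. Every tangent vector of J^1 at j^1f(x) is
  the push-forward of a suitable v \<in> T_xX plus the velocity of such a curve.
\<close>

section \<open>Curves and tangent spaces\<close>

lemma bounded_linear_axis: "bounded_linear (axis k :: 'a::euclidean_space \<Rightarrow> 'a^'n)"
proof -
  have "linear (axis k :: 'a \<Rightarrow> 'a^'n)"
    by (rule linearI) (simp_all add: axis_def vec_eq_iff)
  then show ?thesis
    by (simp add: linear_conv_bounded_linear)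
qed

lemma has_derivative_vec_lambda:
  fixes f :: "'n::finite \<Rightarrow> 'a::real_normed_vector \<Rightarrow> 'b::euclidean_space"
  assumes "\<And>k. (f k has_derivative f' k) F"
  shows "((\<lambda>x. \<chi> k. f k x) has_derivative (\<lambda>h. \<chi> k. f' k h)) F"
proof -
  have vec_eq_sum: "(\<chi> k. g k) = (\<Sum>k\<in>UNIV. axis k (g k))" for g :: "'n \<Rightarrow> 'b"
    by (simp add: vec_eq_iff axis_def)
  have "((\<lambda>x. \<Sum>k\<in>UNIV. axis k (f k x)) has_derivative (\<lambda>h. \<Sum>k\<in>UNIV. axis k (f' k h))) F"
    by (intro has_derivative_sum bounded_linear.has_derivative[OF bounded_linear_axis] assms)
  then show ?thesis
    by (subst (1 2) vec_eq_sum)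
qed

lemma has_vector_derivative_vec_lambda:
  fixes f :: "'n::finite \<Rightarrow> real \<Rightarrow> 'b::euclidean_space"
  assumes "\<And>k. (f k has_vector_derivative f' k) F"
  shows "((\<lambda>t. \<chi> k. f k t) has_vector_derivative (\<chi> k. f' k)) F"
proof -
  have "(\<lambda>h. \<chi> k. h *\<^sub>R f' k) = (\<lambda>h. h *\<^sub>R (\<chi> k. f' k))"
    by (simp add: fun_eq_iff vec_eq_iff)
  with has_derivative_vec_lambda[of f "\<lambda>k h. h *\<^sub>R f' k"] assms show ?thesis
    by (simp add: has_vector_derivative_def)
qed

lemma has_vector_derivative_vec_nth:
  "(f has_vector_derivative f') F \<Longrightarrow> ((\<lambda>t. f t $ k) has_vector_derivative f' $ k) F"
  by (rule bounded_linear.has_vector_derivative[OF bounded_linear_vec_nth])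

lemma has_vector_derivative_fst:
  "(f has_vector_derivative (a, b)) F \<Longrightarrow> ((\<lambda>t. fst (f t)) has_vector_derivative a) F"
  using bounded_linear.has_vector_derivative[OF bounded_linear_fst] by fastforce

lemma has_vector_derivative_snd:
  "(f has_vector_derivative (a, b)) F \<Longrightarrow> ((\<lambda>t. snd (f t)) has_vector_derivative b) F"
  using bounded_linear.has_vector_derivative[OF bounded_linear_snd] by fastforce

lemma has_vector_derivative_inner:
  assumes "(f has_vector_derivative f') (at t)" "(g has_vector_derivative g') (at t)"
  shows "((\<lambda>s. f s \<bullet> g s) has_vector_derivative (f t \<bullet> g' + f' \<bullet> g t)) (at t)"
  using assms unfolding has_vector_derivative_def
  by (auto intro!: derivative_eq_intros simp: algebra_simps)

lemma has_vector_derivative_minus_projection: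
  fixes c p :: "real \<Rightarrow> 'a::real_inner"
  assumes "(c has_vector_derivative c') (at t)" "(p has_vector_derivative p') (at t)"
  shows "((\<lambda>s. c s - (c s \<bullet> p s) *\<^sub>R p s) has_vector_derivative
            c' - (c' \<bullet> p t + c t \<bullet> p') *\<^sub>R p t - (c t \<bullet> p t) *\<^sub>R p') (at t)"
  using assms unfolding has_vector_derivative_def
  by (auto intro!: derivative_eq_intros simp: algebra_simps inner_commute)

lemma inner_derivative_eq_0_if_locally_constant:
  assumes "(f has_vector_derivative f') (at 0)" "(g has_vector_derivative g') (at 0)"
    and "\<forall>\<^sub>F t in nhds 0. f t \<bullet> g t = c"
  shows "f 0 \<bullet> g' + f' \<bullet> g 0 = 0"
proof -
  obtain S where S: "open S" "0 \<in> S" "\<forall>t\<in>S. f t \<bullet> g t = c"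
    using assms(3) unfolding eventually_nhds by blast
  have "((\<lambda>t. c) has_vector_derivative (f 0 \<bullet> g' + f' \<bullet> g 0)) (at 0)"
    by (rule has_vector_derivative_transform_within_open[OF has_vector_derivative_inner[OF assms(1,2)] S(1,2)])
      (use S(3) in auto)
  then show ?thesis
    using vector_derivative_unique_at has_vector_derivative_const by blast
qed

lemma eventually_nhds_0_iff_interval:
  "(\<forall>\<^sub>F t in nhds 0. P t) \<longleftrightarrow> (\<exists>e>0. \<forall>t\<in>{-e<..<e}. P (t::real))"
  unfolding eventually_nhds_metric dist_real_def by (auto simp: abs_less_iff)

lemma tangent_space_iff:
  "v \<in> tangent_space M p \<longleftrightarrow>
     (\<exists>\<gamma>. \<gamma> 0 = p \<and> (\<forall>\<^sub>F t in nhds 0. \<gamma> t \<in> M) \<and> (\<gamma> has_vector_derivative v) (at 0))"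
  unfolding tangent_space_def eventually_nhds_0_iff_interval by blast

lemma push_tangent_iff:
  "w \<in> push_tangent g M p \<longleftrightarrow>
     (\<exists>\<gamma> v. \<gamma> 0 = p \<and> (\<forall>\<^sub>F t in nhds 0. \<gamma> t \<in> M) \<and> (\<gamma> has_vector_derivative v) (at 0)
        \<and> ((g \<circ> \<gamma>) has_vector_derivative w) (at 0))"
  unfolding push_tangent_def eventually_nhds_0_iff_interval by blast

lemma tangent_space_mono: "M \<subseteq> N \<Longrightarrow> tangent_space M p \<subseteq> tangent_space N p"
  unfolding tangent_space_def by blast

lemma push_tangent_subset_tangent_space:
  assumes "\<And>q. q \<in> M \<Longrightarrow> g q \<in> N"
  shows "push_tangent g M p \<subseteq> tangent_space N (g p)"
proof
  fix w assume "w \<in> push_tangent g M p"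
  then obtain \<gamma> where \<gamma>: "\<gamma> 0 = p" "\<forall>\<^sub>F t in nhds 0. \<gamma> t \<in> M"
    "((g \<circ> \<gamma>) has_vector_derivative w) (at 0)"
    unfolding push_tangent_iff by blast
  have "\<forall>\<^sub>F t in nhds 0. (g \<circ> \<gamma>) t \<in> N"
    using \<gamma>(2) by eventually_elim (simp add: assms)
  with \<gamma> show "w \<in> tangent_space N (g p)"
    unfolding tangent_space_iff by (intro exI[of _ "g \<circ> \<gamma>"]) auto
qed

lemma sum_scaleR_axis: "(\<Sum>i\<in>UNIV. u $ i *\<^sub>R axis i (1::real)) = u"
  using basis_expansion[of u] by (simp add: scalar_mult_eq_scaleR)

lemma unit_vectors_parallel_if_hyperplanes_eq:
  fixes a b :: "'a::real_inner"
  assumes "norm a = 1" "norm b = 1" "{z. a \<bullet> z = 0} = {z. b \<bullet> z = 0}"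
  shows "b = (b \<bullet> a) *\<^sub>R a" "\<bar>b \<bullet> a\<bar> = 1"
proof -
  let ?w = "b - (b \<bullet> a) *\<^sub>R a"
  have aa: "a \<bullet> a = 1" "b \<bullet> b = 1"
    using assms(1,2) by (simp_all add: norm_eq_1)
  then have "a \<bullet> ?w = 0"
    by (simp add: inner_diff_right inner_commute)
  then have bw: "b \<bullet> ?w = 0"
    using assms(3) by blast
  then have "?w \<bullet> ?w = 0"
    using \<open>a \<bullet> ?w = 0\<close> by (simp add: inner_diff_left)
  then show "b = (b \<bullet> a) *\<^sub>R a"
    by simp
  from bw aa have "(b \<bullet> a)\<^sup>2 = 1"
    by (simp add: inner_diff_right power2_eq_square)
  then show "\<bar>b \<bullet> a\<bar> = 1"
    by (auto simp: power2_eq_1_iff)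
qed

lemma dim_lt_card_if_not_UNIV:
  fixes S :: "(real^'d) set"
  assumes "subspace S" "S \<noteq> UNIV"
  shows "dim S < CARD('d)"
proof -
  have "span S \<noteq> UNIV"
    using assms by (metis span_eq_iff)
  then have "dim S \<noteq> CARD('d)"
    using dim_eq_full[of S] by simp
  moreover have "dim S \<le> CARD('d)"
    using dim_subset_UNIV[of S] by simp
  ultimately show ?thesis
    by simp
qed

lemma inj_on_if_near_identity:
  fixes f :: "'a::euclidean_space \<Rightarrow> 'a"
  assumes "linear f" "subspace S" "\<And>c. c \<in> S \<Longrightarrow> c \<noteq> 0 \<Longrightarrow> norm (f c - c) < norm c"
  shows "inj_on f S"
proof (rule linear_inj_on_iff_eq_0[OF assms(1,2), THEN iffD2], intro ballI impI)
  fix c assume "c \<in> S" "f c = 0"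
  then show "c = 0"
    using assms(3) by fastforce
qed

lemma inj_on_perturbed_reject:
  fixes q \<gamma> :: "'a::euclidean_space"
  assumes L: "linear L" "\<And>c. norm (L c) \<le> K * norm c"
    and q: "norm q = 1" and small: "norm (\<gamma> - q) + \<bar>t\<bar> * K < 1"
  shows "inj_on (\<lambda>c. c - (q \<bullet> c) *\<^sub>R q + t *\<^sub>R L c) {c. \<gamma> \<bullet> c = 0}"
proof (rule inj_on_if_near_identity)
  show "linear (\<lambda>c. c - (q \<bullet> c) *\<^sub>R q + t *\<^sub>R L c)"
    using L(1) by (intro linearI) (simp_all add: linear_add linear_scale inner_add_right algebra_simps)
  show "subspace {c. \<gamma> \<bullet> c = 0}"
    by (rule subspace_hyperplane)
  fix c assume "c \<in> {c. \<gamma> \<bullet> c = 0}" "c \<noteq> 0"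
  have "\<bar>q \<bullet> c\<bar> = \<bar>(q - \<gamma>) \<bullet> c\<bar>"
    using \<open>c \<in> {c. \<gamma> \<bullet> c = 0}\<close> by (simp add: inner_diff_left)
  also have "\<dots> \<le> norm (q - \<gamma>) * norm c"
    by (rule Cauchy_Schwarz_ineq2)
  finally have qc: "\<bar>q \<bullet> c\<bar> \<le> norm (\<gamma> - q) * norm c"
    by (simp add: norm_minus_commute)
  have "norm (c - (q \<bullet> c) *\<^sub>R q + t *\<^sub>R L c - c) = norm (t *\<^sub>R L c - (q \<bullet> c) *\<^sub>R q)"
    by (simp add: algebra_simps)
  also have "\<dots> \<le> \<bar>t\<bar> * norm (L c) + \<bar>q \<bullet> c\<bar>"
    using norm_triangle_ineq4[of "t *\<^sub>R L c" "(q \<bullet> c) *\<^sub>R q"] q by simp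
  also have "\<dots> \<le> \<bar>t\<bar> * (K * norm c) + norm (\<gamma> - q) * norm c"
    by (intro add_mono mult_left_mono L(2) qc) simp
  also have "\<dots> = (norm (\<gamma> - q) + \<bar>t\<bar> * K) * norm c"
    by (simp add: algebra_simps)
  also have "\<dots> < norm c"
    using small \<open>c \<noteq> 0\<close> by simp
  finally show "norm (c - (q \<bullet> c) *\<^sub>R q + t *\<^sub>R L c - c) < norm c" .
qed

lemma linear_lin_of: "linear (lin_of M)"
  by (rule linearI) (simp_all add: lin_of_def vec_eq_iff inner_add_right)

lemma lin_of_eq_imp_rows_eq:
  assumes "subspace T" "\<And>i. A $ i \<in> T" "\<And>i. B $ i \<in> T" "\<And>v. v \<in> T \<Longrightarrow> lin_of A v = lin_of B v"
  shows "A = B"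
proof (rule vec_eq_iff[THEN iffD2], rule allI)
  fix i
  have "A $ i - B $ i \<in> T"
    using assms(1-3) by (simp add: subspace_diff)
  then have "A $ i \<bullet> (A $ i - B $ i) = B $ i \<bullet> (A $ i - B $ i)"
    using assms(4) by (simp add: lin_of_def vec_eq_iff)
  then have "(A $ i - B $ i) \<bullet> (A $ i - B $ i) = 0"
    by (simp add: inner_diff_left)
  then show "A $ i = B $ i"
    by simp
qed

lemma dim_lin_of_image_le:
  fixes M :: "'a::euclidean_space ^ 'd"
  assumes "u \<noteq> 0" "(\<Sum>i\<in>UNIV. u $ i *\<^sub>R M $ i) = 0"
  shows "dim (lin_of M ` S) \<le> CARD('d) - 1"
proof -
  have "u \<bullet> lin_of M v = (\<Sum>i\<in>UNIV. u $ i *\<^sub>R M $ i) \<bullet> v" for v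
    by (simp add: lin_of_def inner_vec_def inner_sum_left)
  then have "lin_of M ` S \<subseteq> {a. u \<bullet> a = 0}"
    using assms(2) by auto
  from dim_subset[OF this] show ?thesis
    using dim_hyperplane[OF assms(1)] by simp
qed

section \<open>The product of spheres\<close>

text \<open>For a unit vector p and v \<bottom> p the vector p + t v has norm sqrt(1 + t^2 |v|^2), so this is
  the radial projection of the tangent line onto the sphere.\<close>
definition sphere_curve :: "'a::real_inner \<Rightarrow> 'a \<Rightarrow> real \<Rightarrow> 'a" where
  "sphere_curve p v t = (1 / sqrt (1 + t\<^sup>2 * (norm v)\<^sup>2)) *\<^sub>R (p + t *\<^sub>R v)"

lemma sphere_curve_0 [simp]: "sphere_curve p v 0 = p"
  by (simp add: sphere_curve_def)

lemma has_vector_derivative_sphere_curve: "(sphere_curve p v has_vector_derivative v) (at 0)"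
proof -
  have "((\<lambda>t. 1 / sqrt (1 + t\<^sup>2 * (norm v)\<^sup>2)) has_real_derivative 0) (at 0)"
    by (auto intro!: derivative_eq_intros)
  from has_vector_derivative_scaleR[OF this, of "\<lambda>t. p + t *\<^sub>R v" v] show ?thesis
    unfolding sphere_curve_def by (auto intro!: derivative_eq_intros)
qed

lemma norm_sphere_curve:
  assumes "norm p = 1" "p \<bullet> v = 0"
  shows "norm (sphere_curve p v t) = 1"
proof -
  have "(norm (p + t *\<^sub>R v))\<^sup>2 = p \<bullet> p + 2 * t * (p \<bullet> v) + t\<^sup>2 * (v \<bullet> v)"
    unfolding power2_norm_eq_inner
    by (simp add: inner_add_left inner_add_right inner_commute power2_eq_square algebra_simps)
  also have "\<dots> = 1 + t\<^sup>2 * (norm v)\<^sup>2"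
    using assms by (simp add: power2_norm_eq_inner norm_eq_1)
  finally have "(norm (p + t *\<^sub>R v))\<^sup>2 = 1 + t\<^sup>2 * (norm v)\<^sup>2" .
  then have "norm (p + t *\<^sub>R v) = sqrt (1 + t\<^sup>2 * (norm v)\<^sup>2)"
    by (metis norm_ge_zero real_sqrt_unique)
  moreover have "sqrt (1 + t\<^sup>2 * (norm v)\<^sup>2) > 0"
    by (simp add: add_pos_nonneg)
  ultimately show ?thesis
    by (simp add: sphere_curve_def)
qed

definition sphere_product :: "('a::real_normed_vector ^ 'n) set" where
  "sphere_product = {x. \<forall>k. norm (x $ k) = 1}"

definition sphere_product_tangent :: "'a::real_inner ^ 'n \<Rightarrow> ('a ^ 'n) set" where
  "sphere_product_tangent x = {v. \<forall>k. x $ k \<bullet> v $ k = 0}"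

definition sphere_product_curve :: "'a::real_inner ^ 'n \<Rightarrow> 'a ^ 'n \<Rightarrow> real \<Rightarrow> 'a ^ 'n" where
  "sphere_product_curve x v t = (\<chi> k. sphere_curve (x $ k) (v $ k) t)"

lemma sphere_product_curve_0 [simp]: "sphere_product_curve x v 0 = x"
  by (simp add: sphere_product_curve_def vec_eq_iff)

lemma has_vector_derivative_sphere_product_curve:
  fixes x v :: "'a::euclidean_space ^ 'n"
  shows "(sphere_product_curve x v has_vector_derivative v) (at 0)"
  unfolding sphere_product_curve_def
  using has_vector_derivative_vec_lambda[of "\<lambda>k. sphere_curve (x $ k) (v $ k)" "\<lambda>k. v $ k",
      OF has_vector_derivative_sphere_curve]
  by simp

lemma sphere_product_curve_in_sphere_product:
  "x \<in> sphere_product \<Longrightarrow> v \<in> sphere_product_tangent x \<Longrightarrow> sphere_product_curve x v t \<in> sphere_product"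
  by (simp add: sphere_product_def sphere_product_tangent_def sphere_product_curve_def norm_sphere_curve)

lemma sphere_product_norm_component: "x \<in> sphere_product \<Longrightarrow> norm (x $ k) = 1"
  by (simp add: sphere_product_def)

lemma sphere_product_component_nonzero: "x \<in> sphere_product \<Longrightarrow> x $ k \<noteq> 0"
  by (metis sphere_product_norm_component norm_zero zero_neq_one)

lemma subspace_sphere_product_tangent: "subspace (sphere_product_tangent x)"
  unfolding subspace_def sphere_product_tangent_def by (auto simp: inner_add_right)

lemma tangent_space_sphere_product:
  fixes x :: "'a::euclidean_space ^ 'n"
  assumes "x \<in> sphere_product"
  shows "tangent_space sphere_product x = sphere_product_tangent x"
proof (intro subset_antisym subsetI)
  fix v assume "v \<in> tangent_space sphere_product x"
  then obtain \<gamma> where \<gamma>: "\<gamma> 0 = x" "\<forall>\<^sub>F t in nhds 0. \<gamma> t \<in> sphere_product"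
    "(\<gamma> has_vector_derivative v) (at 0)"
    unfolding tangent_space_iff by blast
  have "x $ k \<bullet> v $ k = 0" for k
  proof -
    have "\<forall>\<^sub>F t in nhds 0. \<gamma> t $ k \<bullet> \<gamma> t $ k = 1"
      using \<gamma>(2) by eventually_elim (simp add: sphere_product_def norm_eq_1)
    from inner_derivative_eq_0_if_locally_constant[OF has_vector_derivative_vec_nth[OF \<gamma>(3)]
        has_vector_derivative_vec_nth[OF \<gamma>(3)] this]
      \<gamma>(1,3) show ?thesis
      by (simp add: inner_commute)
  qed
  then show "v \<in> sphere_product_tangent x"
    by (simp add: sphere_product_tangent_def)
next
  fix v assume "v \<in> sphere_product_tangent x"
  then show "v \<in> tangent_space sphere_product x"
    unfolding tangent_space_iff
    using assms sphere_product_curve_in_sphere_product has_vector_derivative_sphere_product_curve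
    by (intro exI[of _ "sphere_product_curve x v"] conjI always_eventually allI) auto
qed

lemma sphere_product_tangent_signed_copies:
  assumes "\<And>k. \<bar>eps k\<bar> = 1"
  shows "sphere_product_tangent (\<chi> k. eps k *\<^sub>R u) = {v. \<forall>k. u \<bullet> v $ k = 0}"
  using assms by (auto simp: sphere_product_tangent_def) (metis abs_zero zero_neq_one mult_eq_0_iff)

section \<open>The singular set of the sum map\<close>

abbreviation component_sum :: "real^'d^'n \<Rightarrow> real^'d" where
  "component_sum \<equiv> \<lambda>x. \<Sum>k\<in>UNIV. x $ k"

lemma linear_component_sum: "linear component_sum"
  by (rule linearI) (auto simp: sum.distrib scaleR_sum_right)

lemma Dmap_component_sum: "Dmap (component_sum :: real^'d^'n \<Rightarrow> _) x = component_sum"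
  unfolding Dmap_def
  by (rule frechet_derivative_at[symmetric], rule linear_imp_has_derivative[OF linear_component_sum])

lemma hyperplane_subset_component_sum_image:
  "{a. x $ k \<bullet> a = 0} \<subseteq> component_sum ` sphere_product_tangent x"
proof
  fix a assume "a \<in> {a. x $ k \<bullet> a = 0}"
  then have "axis k a \<in> sphere_product_tangent x"
    by (auto simp: sphere_product_tangent_def axis_def)
  moreover have "component_sum (axis k a) = a"
    by (simp add: axis_def)
  ultimately show "a \<in> component_sum ` sphere_product_tangent x"
    by (metis image_eqI)
qed

lemma subspace_component_sum_image: "subspace (component_sum ` sphere_product_tangent x)"
  by (rule linear_subspace_image[OF linear_component_sum subspace_sphere_product_tangent])

lemma dim_component_sum_image_ge:
  fixes x :: "real^'d^'n"
  assumes "x \<in> sphere_product"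
  shows "CARD('d) - 1 \<le> dim (component_sum ` sphere_product_tangent x)"
proof -
  obtain k :: 'n where True by blast
  have "dim {a. x $ k \<bullet> a = 0} = CARD('d) - 1"
    using dim_hyperplane[OF sphere_product_component_nonzero[OF assms]] by simp
  then show ?thesis
    using dim_subset[OF hyperplane_subset_component_sum_image[of x k]] by simp
qed

lemma corank_at_component_sum:
  fixes x :: "real^'d^'n"
  assumes "x \<in> sphere_product"
  shows "corank_at sphere_product component_sum x =
           (if component_sum ` sphere_product_tangent x = UNIV then 0 else 1)"
proof -
  have "CARD('d) - dim (component_sum ` sphere_product_tangent x) = 1"
    if "component_sum ` sphere_product_tangent x \<noteq> UNIV"
    using dim_component_sum_image_ge[OF assms]
      dim_lt_card_if_not_UNIV[OF subspace_component_sum_image that] by linarith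
  then show ?thesis
    by (simp add: corank_at_def Dmap_component_sum tangent_space_sphere_product[OF assms] dim_UNIV)
qed

lemma sing_set_component_sum:
  "sing_set sphere_product (component_sum :: real^'d^'n \<Rightarrow> _) =
     Sk_set 1 sphere_product component_sum"
proof -
  have "Dmap component_sum x ` tangent_space sphere_product x \<noteq> UNIV \<longleftrightarrow>
          corank_at sphere_product component_sum x = 1"
    if "x \<in> sphere_product" for x :: "real^'d^'n"
    by (simp add: Dmap_component_sum tangent_space_sphere_product[OF that]
        corank_at_component_sum[OF that])
  then show ?thesis
    unfolding sing_set_def Sk_set_def by blast
qed

lemma component_sum_image_eq_hyperplane:
  fixes x :: "real^'d^'n"
  assumes "x \<in> sphere_product" "component_sum ` sphere_product_tangent x \<noteq> UNIV"
  shows "component_sum ` sphere_product_tangent x = {a. x $ k \<bullet> a = 0}"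
proof (rule subspace_dim_equal[symmetric])
  have "dim {a. x $ k \<bullet> a = 0} = CARD('d) - 1"
    using dim_hyperplane[OF sphere_product_component_nonzero[OF assms(1)]] by simp
  then show "dim (component_sum ` sphere_product_tangent x) \<le> dim {a. x $ k \<bullet> a = 0}"
    using dim_lt_card_if_not_UNIV[OF subspace_component_sum_image assms(2)] by simp
qed (simp_all add: subspace_hyperplane subspace_component_sum_image hyperplane_subset_component_sum_image)

lemma Sk_set_1_component_sum:
  "Sk_set 1 sphere_product (component_sum :: real^'d^'n \<Rightarrow> _) =
     {(\<chi> k. eps k *\<^sub>R u) | u eps. norm u = 1 \<and> (\<forall>k. \<bar>eps k\<bar> = 1)}"
proof (intro subset_antisym subsetI)
  fix x assume "x \<in> Sk_set 1 sphere_product (component_sum :: real^'d^'n \<Rightarrow> _)"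
  then have x1: "x \<in> sphere_product" and "corank_at sphere_product component_sum x = 1"
    unfolding Sk_set_def by blast+
  then have x: "x \<in> sphere_product" "component_sum ` sphere_product_tangent x \<noteq> UNIV"
    using corank_at_component_sum[OF x1] by (metis zero_neq_one)+
  obtain j :: 'n where True by blast
  have hyp: "{a. x $ j \<bullet> a = 0} = {a. x $ k \<bullet> a = 0}" for k
    by (metis component_sum_image_eq_hyperplane[OF x])
  note parallel = unit_vectors_parallel_if_hyperplanes_eq[OF sphere_product_norm_component[OF x(1)]
      sphere_product_norm_component[OF x(1)] hyp]
  show "x \<in> {(\<chi> k. eps k *\<^sub>R u) | u eps. norm u = 1 \<and> (\<forall>k. \<bar>eps k\<bar> = 1)}"
  proof (intro CollectI exI conjI allI)
    show "x = (\<chi> k. (x $ k \<bullet> x $ j) *\<^sub>R x $ j)"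
      by (rule vec_eq_iff[THEN iffD2], rule allI, simp only: vec_lambda_beta, rule parallel(1))
  qed (use parallel(2) sphere_product_norm_component[OF x(1)] in auto)
next
  fix x :: "real^'d^'n" assume "x \<in> {(\<chi> k. eps k *\<^sub>R u) | u eps. norm u = 1 \<and> (\<forall>k. \<bar>eps k\<bar> = 1)}"
  then obtain u eps where x: "x = (\<chi> k. eps k *\<^sub>R u)" and u: "norm u = 1" and eps: "\<And>k. \<bar>eps k\<bar> = 1"
    by blast
  have x_in: "x \<in> sphere_product"
    using u eps by (simp add: x sphere_product_def)
  have "component_sum ` sphere_product_tangent x \<subseteq> {a. u \<bullet> a = 0}"
  proof clarify
    fix v assume "v \<in> sphere_product_tangent x"
    then have "eps k * (u \<bullet> v $ k) = 0" for k
      by (simp add: sphere_product_tangent_def x)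
    then have "u \<bullet> v $ k = 0" for k
      by (metis eps abs_zero zero_neq_one mult_eq_0_iff)
    then show "u \<bullet> component_sum v = 0"
      by (simp add: inner_sum_right)
  qed
  moreover have "u \<notin> {a. u \<bullet> a = 0}"
    using u by (simp add: norm_eq_1)
  ultimately have "component_sum ` sphere_product_tangent x \<noteq> UNIV"
    by blast
  with x_in show "x \<in> Sk_set 1 sphere_product (component_sum :: real^'d^'n \<Rightarrow> _)"
    by (simp add: Sk_set_def corank_at_component_sum)
qed

section \<open>The kernel condition along S_1\<close>

lemma sum_signs_nonzero:
  fixes eps :: "'a \<Rightarrow> real"
  assumes "finite A" "odd (card A)" "\<And>k. k \<in> A \<Longrightarrow> \<bar>eps k\<bar> = 1"
  shows "sum eps A \<noteq> 0"
proof -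
  define s :: "'a \<Rightarrow> int" where "s k = (if eps k = 1 then 1 else -1)" for k
  have "eps k = of_int (s k)" if "k \<in> A" for k
    using assms(3)[OF that] by (auto simp: s_def abs_if split: if_splits)
  then have sum_eq: "sum eps A = of_int (sum s A)"
    by simp
  have "odd (sum s A)"
    using assms(1,2) by (simp add: even_sum_iff s_def)
  then have "sum s A \<noteq> 0"
    by auto
  with sum_eq show ?thesis
    by (metis of_int_eq_0_iff)
qed

lemma signed_copies_in_tangent_space_Sk_set_1:
  fixes u c :: "real^'d" and eps :: "'n::finite \<Rightarrow> real"
  assumes u: "norm u = 1" and eps: "\<And>k. \<bar>eps k\<bar> = 1" and uc: "u \<bullet> c = 0"
  shows "(\<chi> k. eps k *\<^sub>R c) \<in> tangent_space (Sk_set 1 sphere_product component_sum) (\<chi> k. eps k *\<^sub>R u)"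
proof -
  have "((\<lambda>t. \<chi> k. eps k *\<^sub>R sphere_curve u c t) has_vector_derivative (\<chi> k. eps k *\<^sub>R c)) (at 0)"
    by (intro has_vector_derivative_vec_lambda
        bounded_linear.has_vector_derivative[OF bounded_linear_scaleR_right]
        has_vector_derivative_sphere_curve)
  moreover have "(\<chi> k. eps k *\<^sub>R sphere_curve u c t) \<in> Sk_set 1 sphere_product component_sum" for t
    unfolding Sk_set_1_component_sum using norm_sphere_curve[OF u uc] eps by blast
  ultimately show ?thesis
    unfolding tangent_space_iff by (intro exI conjI always_eventually allI) auto
qed

lemma tangent_space_eq_fold_tangent_plus_kernel:
  fixes x :: "real^'d^'n"
  assumes "odd CARD('n)" and x: "x \<in> Sk_set 1 sphere_product component_sum"
  shows "{a + b | a b. a \<in> tangent_space (Sk_set 1 sphere_product component_sum) x \<and>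
            b \<in> {v \<in> tangent_space sphere_product x. Dmap component_sum x v = 0}} =
           tangent_space sphere_product x"
proof -
  let ?S = "tangent_space (Sk_set 1 sphere_product component_sum) x"
  let ?K = "{v \<in> tangent_space sphere_product x. Dmap component_sum x v = 0}"
  have x_in: "x \<in> sphere_product"
    using x by (simp add: Sk_set_def)
  obtain u eps where x_eq: "x = (\<chi> k. eps k *\<^sub>R u)" and u: "norm u = 1" and eps: "\<And>k. \<bar>eps k\<bar> = 1"
    using x unfolding Sk_set_1_component_sum by blast
  have T: "tangent_space sphere_product x = {v. \<forall>k. u \<bullet> v $ k = 0}"
    using tangent_space_sphere_product[OF x_in] sphere_product_tangent_signed_copies[OF eps]
    by (simp add: x_eq)
  have "?S \<subseteq> tangent_space sphere_product x"
    by (rule tangent_space_mono) (auto simp: Sk_set_def)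
  then have "{a + b | a b. a \<in> ?S \<and> b \<in> ?K} \<subseteq> tangent_space sphere_product x"
    unfolding T by (auto simp: inner_add_right)
  moreover have "w \<in> {a + b | a b. a \<in> ?S \<and> b \<in> ?K}" if w: "w \<in> tangent_space sphere_product x" for w
  proof -
    define \<sigma> where "\<sigma> = (\<Sum>k\<in>UNIV. eps k)"
    have "\<sigma> \<noteq> 0"
      unfolding \<sigma>_def using sum_signs_nonzero[of UNIV eps] assms(1) eps by simp
    define c where "c = (1 / \<sigma>) *\<^sub>R component_sum w"
    define a where "a = (\<chi> k. eps k *\<^sub>R c)"
    have uc: "u \<bullet> c = 0"
      using w by (simp add: T c_def inner_sum_right)
    then have "a \<in> ?S"
      unfolding a_def x_eq by (rule signed_copies_in_tangent_space_Sk_set_1[OF u eps])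
    moreover have "w - a \<in> tangent_space sphere_product x"
      using w uc by (simp add: T a_def inner_diff_right)
    moreover have "component_sum (w - a) = 0"
    proof -
      have "component_sum a = \<sigma> *\<^sub>R c"
        by (simp add: a_def \<sigma>_def scaleR_sum_left)
      then show ?thesis
        using \<open>\<sigma> \<noteq> 0\<close> by (simp add: c_def sum_subtractf)
    qed
    ultimately show ?thesis
      by (force simp: Dmap_component_sum)
  qed
  ultimately show ?thesis
    by blast
qed

section \<open>First jets of the sum map\<close>

definition sphere_product_projection :: "'a::real_inner ^ 'n \<Rightarrow> 'a ^ 'n \<Rightarrow> 'a ^ 'n" where
  "sphere_product_projection x c = (\<chi> k. c $ k - (c $ k \<bullet> x $ k) *\<^sub>R x $ k)"

lemma sphere_product_projection_in_tangent:
  "x \<in> sphere_product \<Longrightarrow> sphere_product_projection x c \<in> sphere_product_tangent x"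
  by (simp add: sphere_product_projection_def sphere_product_tangent_def sphere_product_def
      inner_diff_right inner_commute norm_eq_1)

lemma inner_sphere_product_projection:
  "v \<in> sphere_product_tangent x \<Longrightarrow> sphere_product_projection x c \<bullet> v = c \<bullet> v"
  by (simp add: sphere_product_projection_def sphere_product_tangent_def inner_vec_def inner_diff_left)

lemma sphere_product_projection_id:
  "c \<in> sphere_product_tangent x \<Longrightarrow> sphere_product_projection x c = c"
  by (simp add: sphere_product_projection_def sphere_product_tangent_def vec_eq_iff inner_commute)

lemma has_vector_derivative_sphere_product_projection:
  fixes \<gamma> C :: "real \<Rightarrow> 'a::euclidean_space ^ 'n"
  assumes "(\<gamma> has_vector_derivative z) (at 0)" "(C has_vector_derivative C') (at 0)"
  shows "((\<lambda>t. sphere_product_projection (\<gamma> t) (C t)) has_vector_derivative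
           (\<chi> k. C' $ k - (C' $ k \<bullet> \<gamma> 0 $ k + C 0 $ k \<bullet> z $ k) *\<^sub>R \<gamma> 0 $ k
                   - (C 0 $ k \<bullet> \<gamma> 0 $ k) *\<^sub>R z $ k)) (at 0)"
  unfolding sphere_product_projection_def
  by (intro has_vector_derivative_vec_lambda has_vector_derivative_minus_projection
      has_vector_derivative_vec_nth assms)

text \<open>Row i is the projection of the constant field e_i onto the tangent space: the gradient of the
  i-th coordinate of the component sum along the sphere product.\<close>
definition component_sum_jet_rows :: "real^'d^'n \<Rightarrow> (real^'d^'n)^'d" where
  "component_sum_jet_rows x = (\<chi> i. sphere_product_projection x (\<chi> k. axis i 1))"

lemma component_sum_jet_rows_nth:
  "component_sum_jet_rows x $ i $ k = axis i 1 - (x $ k $ i) *\<^sub>R x $ k"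
  by (simp add: component_sum_jet_rows_def sphere_product_projection_def inner_axis')

lemma component_sum_jet_rows_in_tangent:
  "x \<in> sphere_product \<Longrightarrow> component_sum_jet_rows x $ i \<in> sphere_product_tangent x"
  by (simp add: component_sum_jet_rows_def sphere_product_projection_in_tangent)

lemma inner_component_sum_jet_rows:
  "c \<in> sphere_product_tangent x \<Longrightarrow> component_sum_jet_rows x $ i $ k \<bullet> c $ k = c $ k $ i"
  by (simp add: component_sum_jet_rows_nth sphere_product_tangent_def inner_diff_left inner_axis')

lemma lin_of_component_sum_jet_rows:
  assumes "v \<in> sphere_product_tangent x"
  shows "lin_of (component_sum_jet_rows x) v = component_sum v"
proof -
  have "component_sum_jet_rows x $ i \<bullet> v = (\<chi> k. axis i 1) \<bullet> v" for i
    using inner_sphere_product_projection[OF assms] by (simp add: component_sum_jet_rows_def)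
  also have "(\<chi> k. axis i 1) \<bullet> v = (\<Sum>k\<in>UNIV. v $ k $ i)" for i
    by (subst inner_vec_def) (simp add: inner_axis')
  finally show ?thesis
    by (simp add: lin_of_def vec_eq_iff sum_component)
qed

lemma sum_scaleR_component_sum_jet_rows:
  "(\<Sum>i\<in>UNIV. u $ i *\<^sub>R component_sum_jet_rows x $ i) = (\<chi> k. u - (u \<bullet> x $ k) *\<^sub>R x $ k)"
  by (simp add: vec_eq_iff sum_component component_sum_jet_rows_nth scaleR_diff_right sum_subtractf
      sum_scaleR_axis inner_vec_def flip: scaleR_sum_left)

lemma jet1_component_sum:
  assumes "x \<in> sphere_product"
  shows "jet1 sphere_product component_sum x = (x, component_sum x, component_sum_jet_rows x)"
proof -
  have "(THE A. (\<forall>i. A $ i \<in> tangent_space sphere_product x) \<and>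
       (\<forall>v\<in>tangent_space sphere_product x. lin_of A v = Dmap component_sum x v)) =
        component_sum_jet_rows x"
    unfolding tangent_space_sphere_product[OF assms] Dmap_component_sum
    by (rule the_equality)
      (auto simp: component_sum_jet_rows_in_tangent[OF assms] lin_of_component_sum_jet_rows
        intro!: lin_of_eq_imp_rows_eq[OF subspace_sphere_product_tangent])
  then show ?thesis
    by (simp add: jet1_def)
qed

lemma jet_corank_jet1_component_sum:
  assumes "x \<in> sphere_product"
  shows "jet_corank sphere_product (jet1 sphere_product component_sum x) =
           corank_at sphere_product component_sum x"
proof -
  have "lin_of (component_sum_jet_rows x) ` sphere_product_tangent x =
          component_sum ` sphere_product_tangent x"
    using lin_of_component_sum_jet_rows by (auto intro: image_cong)
  then show ?thesis
    by (simp add: jet1_component_sum[OF assms] jet_corank_def corank_at_def Dmap_component_sum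
        tangent_space_sphere_product[OF assms])
qed

definition component_sum_jet_rows_deriv :: "real^'d^'n \<Rightarrow> real^'d^'n \<Rightarrow> (real^'d^'n)^'d" where
  "component_sum_jet_rows_deriv x v = (\<chi> i. \<chi> k. - ((v $ k $ i) *\<^sub>R x $ k + (x $ k $ i) *\<^sub>R v $ k))"

lemma sum_scaleR_component_sum_jet_rows_deriv:
  "(\<Sum>i\<in>UNIV. u $ i *\<^sub>R component_sum_jet_rows_deriv x v $ i) =
     (\<chi> k. - ((u \<bullet> v $ k) *\<^sub>R x $ k + (u \<bullet> x $ k) *\<^sub>R v $ k))"
  by (simp add: component_sum_jet_rows_deriv_def vec_eq_iff sum_component inner_vec_def algebra_simps
      scaleR_sum_left sum.distrib sum_negf sum_subtractf)

lemma push_tangent_jet1_component_sum: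
  assumes x: "x \<in> sphere_product" and v: "v \<in> sphere_product_tangent x"
  shows "(v, component_sum v, component_sum_jet_rows_deriv x v)
           \<in> push_tangent (jet1 sphere_product component_sum) sphere_product x"
proof -
  let ?\<gamma> = "sphere_product_curve x v"
  have \<gamma>_in: "?\<gamma> t \<in> sphere_product" for t
    by (rule sphere_product_curve_in_sphere_product[OF x v])
  have "((\<lambda>t. component_sum_jet_rows (?\<gamma> t)) has_vector_derivative
          component_sum_jet_rows_deriv x v) (at 0)"
  proof -
    have "((\<lambda>t. sphere_product_projection (?\<gamma> t) (\<chi> k. axis i 1)) has_vector_derivative
            component_sum_jet_rows_deriv x v $ i) (at 0)" for i
      using has_vector_derivative_sphere_product_projection[OF has_vector_derivative_sphere_product_curve
          has_vector_derivative_const, of x v "\<chi> k. axis i 1"]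
      by (simp add: inner_axis' component_sum_jet_rows_deriv_def)
    from has_vector_derivative_vec_lambda[of "\<lambda>i t. sphere_product_projection (?\<gamma> t) (\<chi> k. axis i 1)"
        "\<lambda>i. component_sum_jet_rows_deriv x v $ i", OF this]
    show ?thesis
      by (simp add: component_sum_jet_rows_def)
  qed
  moreover have "((\<lambda>t. component_sum (?\<gamma> t)) has_vector_derivative component_sum v) (at 0)"
    using bounded_linear.has_vector_derivative[OF _ has_vector_derivative_sphere_product_curve]
      linear_component_sum linear_conv_bounded_linear by blast
  ultimately have "((jet1 sphere_product component_sum \<circ> ?\<gamma>) has_vector_derivative
      (v, component_sum v, component_sum_jet_rows_deriv x v)) (at 0)"
    unfolding comp_def jet1_component_sum[OF \<gamma>_in]
    by (intro has_vector_derivative_Pair has_vector_derivative_sphere_product_curve)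
  then show ?thesis
    unfolding push_tangent_iff using \<gamma>_in has_vector_derivative_sphere_product_curve
    by (intro exI[of _ ?\<gamma>] exI[of _ v] conjI always_eventually allI) auto
qed

lemma J1_sphere_product:
  "J1 sphere_product =
     {(x, y, A). x \<in> sphere_product \<and> (\<forall>i. A $ i \<in> sphere_product_tangent x)}"
  unfolding J1_def using tangent_space_sphere_product by fastforce

definition J1_tangent ::
    "real^'d^'n \<Rightarrow> (real^'d^'n)^'d \<Rightarrow> ((real^'d^'n) \<times> (real^'d) \<times> ((real^'d^'n)^'d)) set" where
  "J1_tangent x A = {(w, y', B). w \<in> sphere_product_tangent x \<and>
                       (\<forall>i k. B $ i $ k \<bullet> x $ k + A $ i $ k \<bullet> w $ k = 0)}"

lemma subspace_J1_tangent: "subspace (J1_tangent x A)"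
  unfolding subspace_def J1_tangent_def sphere_product_tangent_def
  by (auto simp: zero_prod_def inner_add_left inner_add_right add_eq_0_iff2 simp flip: distrib_left)

definition J1_curve :: "real^'d^'n \<Rightarrow> real^'d \<Rightarrow> (real^'d^'n)^'d \<Rightarrow>
    real^'d^'n \<Rightarrow> real^'d \<Rightarrow> (real^'d^'n)^'d \<Rightarrow> real \<Rightarrow> (real^'d^'n) \<times> (real^'d) \<times> ((real^'d^'n)^'d)" where
  "J1_curve x y A w y' B t =
     (sphere_product_curve x w t, y + t *\<^sub>R y',
      \<chi> i. sphere_product_projection (sphere_product_curve x w t) (A $ i + t *\<^sub>R B $ i))"

lemma J1_curve_0:
  "(\<And>i. A $ i \<in> sphere_product_tangent x) \<Longrightarrow> J1_curve x y A w y' B 0 = (x, y, A)"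
  by (simp add: J1_curve_def sphere_product_projection_id vec_eq_iff)

lemma J1_curve_in_J1:
  "x \<in> sphere_product \<Longrightarrow> w \<in> sphere_product_tangent x \<Longrightarrow>
     J1_curve x y A w y' B t \<in> J1 sphere_product"
  by (simp add: J1_curve_def J1_sphere_product sphere_product_curve_in_sphere_product
      sphere_product_projection_in_tangent)

lemma has_vector_derivative_J1_curve:
  assumes "\<And>i. A $ i \<in> sphere_product_tangent x" "(w, y', B) \<in> J1_tangent x A"
  shows "(J1_curve x y A w y' B has_vector_derivative (w, y', B)) (at 0)"
proof -
  have "((\<lambda>t. sphere_product_projection (sphere_product_curve x w t) (A $ i + t *\<^sub>R B $ i))
          has_vector_derivative B $ i) (at 0)" for i
  proof -
    have "(\<chi> k. B $ i $ k - (B $ i $ k \<bullet> x $ k + A $ i $ k \<bullet> w $ k) *\<^sub>R x $ k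
                 - (A $ i $ k \<bullet> x $ k) *\<^sub>R w $ k) = B $ i"
      using assms by (simp add: J1_tangent_def sphere_product_tangent_def vec_eq_iff inner_commute)
    moreover have "((\<lambda>t. A $ i + t *\<^sub>R B $ i) has_vector_derivative B $ i) (at 0)"
      by (auto intro!: derivative_eq_intros)
    from has_vector_derivative_sphere_product_projection[OF has_vector_derivative_sphere_product_curve this]
    have "((\<lambda>t. sphere_product_projection (sphere_product_curve x w t) (A $ i + t *\<^sub>R B $ i))
          has_vector_derivative (\<chi> k. B $ i $ k - (B $ i $ k \<bullet> x $ k + A $ i $ k \<bullet> w $ k) *\<^sub>R x $ k
                 - (A $ i $ k \<bullet> x $ k) *\<^sub>R w $ k)) (at 0)"
      by simp
    ultimately show ?thesis
      by simp
  qed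
  from has_vector_derivative_vec_lambda[of "\<lambda>i t. sphere_product_projection (sphere_product_curve x w t)
      (A $ i + t *\<^sub>R B $ i)" "\<lambda>i. B $ i", OF this]
  have "((\<lambda>t. \<chi> i. sphere_product_projection (sphere_product_curve x w t) (A $ i + t *\<^sub>R B $ i))
          has_vector_derivative B) (at 0)"
    by simp
  moreover have "((\<lambda>t. y + t *\<^sub>R y') has_vector_derivative y') (at 0)"
    by (auto intro!: derivative_eq_intros)
  ultimately show ?thesis
    unfolding J1_curve_def
    by (intro has_vector_derivative_Pair has_vector_derivative_sphere_product_curve)
qed

lemma tangent_space_J1:
  assumes x: "x \<in> sphere_product" and A: "\<And>i. A $ i \<in> sphere_product_tangent x"
  shows "tangent_space (J1 sphere_product) (x, y, A) = J1_tangent x A"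
proof (intro subset_antisym subsetI)
  fix V assume "V \<in> tangent_space (J1 sphere_product) (x, y, A)"
  then obtain \<Gamma> where \<Gamma>: "\<Gamma> 0 = (x, y, A)" "\<forall>\<^sub>F t in nhds 0. \<Gamma> t \<in> J1 sphere_product"
    "(\<Gamma> has_vector_derivative V) (at 0)"
    unfolding tangent_space_iff by blast
  obtain w y' B where V: "V = (w, y', B)"
    by (cases V) auto
  have dx: "((\<lambda>t. fst (\<Gamma> t)) has_vector_derivative w) (at 0)"
    using has_vector_derivative_fst \<Gamma>(3) V by blast
  have dA: "((\<lambda>t. snd (snd (\<Gamma> t))) has_vector_derivative B) (at 0)"
    using has_vector_derivative_snd[OF has_vector_derivative_snd[OF \<Gamma>(3)[unfolded V]]] by simp
  have "w \<in> tangent_space sphere_product x"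
    unfolding tangent_space_iff using \<Gamma>(1,2) dx
    by (intro exI[of _ "\<lambda>t. fst (\<Gamma> t)"] conjI) (auto elim: eventually_mono simp: J1_sphere_product)
  moreover have "B $ i $ k \<bullet> x $ k + A $ i $ k \<bullet> w $ k = 0" for i k
  proof -
    have "\<forall>\<^sub>F t in nhds 0. snd (snd (\<Gamma> t)) $ i $ k \<bullet> fst (\<Gamma> t) $ k = 0"
      using \<Gamma>(2) by eventually_elim
        (auto simp: J1_sphere_product sphere_product_tangent_def inner_commute)
    from inner_derivative_eq_0_if_locally_constant[OF
        has_vector_derivative_vec_nth[OF has_vector_derivative_vec_nth[OF dA]]
        has_vector_derivative_vec_nth[OF dx] this] \<Gamma>(1)
    show ?thesis
      by simp
  qed
  ultimately show "V \<in> J1_tangent x A"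
    by (simp add: V J1_tangent_def tangent_space_sphere_product[OF x])
next
  fix V assume "V \<in> J1_tangent x A"
  moreover obtain w y' B where V: "V = (w, y', B)"
    by (cases V) auto
  ultimately have "w \<in> sphere_product_tangent x" and V_in: "(w, y', B) \<in> J1_tangent x A"
    by (simp_all add: J1_tangent_def)
  then have "\<forall>\<^sub>F t in nhds 0. J1_curve x y A w y' B t \<in> J1 sphere_product"
    using J1_curve_in_J1[OF x] by simp
  then show "V \<in> tangent_space (J1 sphere_product) (x, y, A)"
    unfolding tangent_space_iff V
    using J1_curve_0[OF A] has_vector_derivative_J1_curve[OF A V_in] by blast
qed

section \<open>Transversality of the 1-jet to S_1\<close>

lemma dim_perturbed_jet_rows_image_ge:
  fixes x g :: "real^'d^'n" and B :: "(real^'d^'n)^'d"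
  assumes x: "x \<in> sphere_product" and g: "g \<in> sphere_product"
    and K: "\<And>c. norm (lin_of (\<chi> i. B $ i $ k) c) \<le> K * norm c"
    and small: "norm (g $ k - x $ k) + \<bar>t\<bar> * K < 1"
  shows "CARD('d) - 1 \<le> dim (lin_of (component_sum_jet_rows x + t *\<^sub>R B) ` sphere_product_tangent g)"
proof -
  let ?M = "component_sum_jet_rows x + t *\<^sub>R B"
  let ?H = "{c. g $ k \<bullet> c = 0}"
  define f where "f c = c - (x $ k \<bullet> c) *\<^sub>R x $ k + t *\<^sub>R lin_of (\<chi> i. B $ i $ k) c" for c
  have f_eq: "f c = lin_of ?M (axis k c)" for c
  proof -
    have "lin_of ?M (axis k c) $ i = c $ i - (x $ k \<bullet> c) * x $ k $ i + t * (B $ i $ k \<bullet> c)" for i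
      by (simp add: lin_of_def inner_axis component_sum_jet_rows_nth inner_add_left
          inner_diff_left inner_axis')
    then show ?thesis
      by (simp add: f_def vec_eq_iff lin_of_def)
  qed
  have "f = lin_of ?M \<circ> axis k"
    by (simp add: fun_eq_iff f_eq)
  then have "linear f"
    using linear_compose[OF bounded_linear.linear[OF bounded_linear_axis] linear_lin_of] by simp
  have fH: "f ` ?H \<subseteq> lin_of ?M ` sphere_product_tangent g"
    by (auto simp: f_eq sphere_product_tangent_def axis_def intro!: imageI)
  have "inj_on f ?H"
    unfolding f_def
    by (rule inj_on_perturbed_reject[OF linear_lin_of K sphere_product_norm_component[OF x] small])
  moreover have "span ?H = ?H"
    by (simp add: subspace_hyperplane)
  ultimately have "dim (f ` ?H) = dim ?H"
    using dim_image_eq[OF \<open>linear f\<close>, of ?H] by metis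
  moreover have "dim ?H = CARD('d) - 1"
    using dim_hyperplane[OF sphere_product_component_nonzero[OF g]] by simp
  ultimately show ?thesis
    using dim_subset[OF fH] by simp
qed

lemma J1_curve_in_S1_jets:
  fixes x :: "real^'d^'n" and u :: "real^'d"
  assumes x: "x \<in> sphere_product" and z: "z \<in> sphere_product_tangent x" and u: "u \<noteq> 0"
    and rows: "(\<Sum>i\<in>UNIV. u $ i *\<^sub>R component_sum_jet_rows x $ i) = 0"
    and uB: "(\<Sum>i\<in>UNIV. u $ i *\<^sub>R B $ i) = 0"
    and K: "\<And>c. norm (lin_of (\<chi> i. B $ i $ k) c) \<le> K * norm c"
    and small: "norm (sphere_curve (x $ k) (z $ k) t - x $ k) + \<bar>t\<bar> * K < 1"
  shows "J1_curve x y (component_sum_jet_rows x) z y' B t \<in> S1_jets sphere_product"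
proof -
  let ?g = "sphere_product_curve x z t"
  let ?M = "component_sum_jet_rows x + t *\<^sub>R B"
  have g: "?g \<in> sphere_product"
    by (rule sphere_product_curve_in_sphere_product[OF x z])
  have "(\<Sum>i\<in>UNIV. u $ i *\<^sub>R ?M $ i) =
      (\<Sum>i\<in>UNIV. u $ i *\<^sub>R component_sum_jet_rows x $ i) + t *\<^sub>R (\<Sum>i\<in>UNIV. u $ i *\<^sub>R B $ i)"
    by (simp add: scaleR_add_right sum.distrib scaleR_sum_right mult.commute)
  then have le: "dim (lin_of ?M ` sphere_product_tangent ?g) \<le> CARD('d) - 1"
    using rows uB by (intro dim_lin_of_image_le[OF u]) simp
  have ge: "CARD('d) - 1 \<le> dim (lin_of ?M ` sphere_product_tangent ?g)"
    using small by (intro dim_perturbed_jet_rows_image_ge[OF x g K]) (simp add: sphere_product_curve_def)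
  have "lin_of (snd (snd (J1_curve x y (component_sum_jet_rows x) z y' B t))) ` sphere_product_tangent ?g =
      lin_of ?M ` sphere_product_tangent ?g"
    by (auto simp: J1_curve_def lin_of_def inner_sphere_product_projection vec_eq_iff intro!: image_cong)
  then have "jet_corank sphere_product (J1_curve x y (component_sum_jet_rows x) z y' B t) =
      CARD('d) - dim (lin_of ?M ` sphere_product_tangent ?g)"
    by (simp add: jet_corank_def J1_curve_def tangent_space_sphere_product[OF g])
  also have "\<dots> = 1"
    using le ge zero_less_card_finite[where 'a='d] by linarith
  finally show ?thesis
    using J1_curve_in_J1[OF x z] by (simp add: S1_jets_def)
qed

lemma J1_tangent_subset_S1_jets_tangent:
  fixes x :: "real^'d^'n" and u :: "real^'d"
  assumes x: "x \<in> sphere_product" and u: "u \<noteq> 0"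
    and rows: "(\<Sum>i\<in>UNIV. u $ i *\<^sub>R component_sum_jet_rows x $ i) = 0"
    and V: "(z, y', B) \<in> J1_tangent x (component_sum_jet_rows x)"
    and uB: "(\<Sum>i\<in>UNIV. u $ i *\<^sub>R B $ i) = 0"
  shows "(z, y', B) \<in> tangent_space (S1_jets sphere_product) (x, y, component_sum_jet_rows x)"
proof -
  have z: "z \<in> sphere_product_tangent x"
    using V by (simp add: J1_tangent_def)
  obtain k :: 'n where True by blast
  obtain K where K: "\<And>c. norm (lin_of (\<chi> i. B $ i $ k) c) \<le> K * norm c"
    using bounded_linear.bounded[OF linear_lin_of[THEN linear_conv_bounded_linear[THEN iffD1]]]
    by (metis mult.commute)
  let ?h = "\<lambda>t. norm (sphere_curve (x $ k) (z $ k) t - x $ k) + \<bar>t\<bar> * K"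
  have "isCont ?h 0"
    using has_vector_derivative_continuous[OF has_vector_derivative_sphere_curve]
    by (intro continuous_intros)
  then have "(?h \<longlongrightarrow> 0) (nhds 0)"
    using tendsto_at_iff_tendsto_nhds[of ?h 0] by (simp add: isCont_def)
  then have "\<forall>\<^sub>F t in nhds 0. ?h t < 1"
    by (rule order_tendstoD) simp
  then have "\<forall>\<^sub>F t in nhds 0. J1_curve x y (component_sum_jet_rows x) z y' B t \<in> S1_jets sphere_product"
    by eventually_elim (rule J1_curve_in_S1_jets[OF x z u rows uB K])
  then show ?thesis
    unfolding tangent_space_iff
    using J1_curve_0 has_vector_derivative_J1_curve[OF _ V] component_sum_jet_rows_in_tangent[OF x]
    by blast
qed

lemma push_tangent_cancelling_contractionE:
  fixes u :: "real^'d" and eps :: "'n::finite \<Rightarrow> real"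
  assumes x_def: "x = (\<chi> k. eps k *\<^sub>R u)" and u: "norm u = 1" and eps: "\<And>k. \<bar>eps k\<bar> = 1"
    and V: "(w, y', B) \<in> J1_tangent x (component_sum_jet_rows x)"
  obtains v where "v \<in> sphere_product_tangent x"
    "(\<Sum>i\<in>UNIV. u $ i *\<^sub>R (B - component_sum_jet_rows_deriv x v) $ i) = 0"
proof -
  have eps2: "eps k * eps k = 1" for k
    using eps[of k] by (metis abs_mult_self_eq mult_1_right)
  have u_x: "u \<bullet> x $ k = eps k" for k
    using u by (simp add: x_def norm_eq_1)
  have T: "sphere_product_tangent x = {v. \<forall>k. u \<bullet> v $ k = 0}"
    using sphere_product_tangent_signed_copies[OF eps] by (simp add: x_def)
  have wT: "w \<in> sphere_product_tangent x"
    and BC: "\<And>i k. B $ i $ k \<bullet> x $ k + component_sum_jet_rows x $ i $ k \<bullet> w $ k = 0"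
    using V by (simp_all add: J1_tangent_def)
  have uB: "u \<bullet> B $ i $ k = - eps k * w $ k $ i" for i k
  proof -
    have "eps k * (u \<bullet> B $ i $ k) = B $ i $ k \<bullet> x $ k"
      by (simp add: x_def inner_commute)
    also have "\<dots> = - w $ k $ i"
      using BC[of i k] inner_component_sum_jet_rows[OF wT, of i k] by linarith
    finally have "eps k * (eps k * (u \<bullet> B $ i $ k)) = - eps k * w $ k $ i"
      by simp
    then show ?thesis
      by (simp add: eps2 flip: mult.assoc)
  qed
  \<comment> \<open>the u-contraction of component_sum_jet_rows_deriv x v is (- \<epsilon>_k v_k)_k, so this v
    cancels the u-contraction of B\<close>
  define v where "v = (\<chi> k. (- eps k) *\<^sub>R (\<Sum>i\<in>UNIV. u $ i *\<^sub>R B $ i $ k))"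
  have uv: "u \<bullet> v $ k = 0" for k
  proof -
    have "u \<bullet> v $ k = eps k * eps k * (\<Sum>i\<in>UNIV. u $ i * w $ k $ i)"
      by (simp add: v_def inner_sum_right uB sum_distrib_left sum_negf algebra_simps)
    also have "\<dots> = 0"
      using wT by (simp add: T inner_vec_def)
    finally show ?thesis .
  qed
  then have "v \<in> sphere_product_tangent x"
    by (simp add: T)
  moreover have "(\<Sum>i\<in>UNIV. u $ i *\<^sub>R (B - component_sum_jet_rows_deriv x v) $ i) = 0"
    using uv u_x eps2
    by (simp add: sum_scaleR_component_sum_jet_rows_deriv v_def vec_eq_iff scaleR_diff_right
        sum_subtractf sum_component)
  ultimately show ?thesis
    by (rule that)
qed

lemma push_tangent_jet1_component_sum_subset:
  assumes x: "x \<in> sphere_product"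
  shows "push_tangent (jet1 sphere_product component_sum) sphere_product x \<subseteq>
           J1_tangent x (component_sum_jet_rows x)"
  using push_tangent_subset_tangent_space[of sphere_product "jet1 sphere_product component_sum"
      "J1 sphere_product" x]
    tangent_space_J1[OF x component_sum_jet_rows_in_tangent[OF x]]
  by (simp add: jet1_component_sum x J1_sphere_product component_sum_jet_rows_in_tangent)

lemma tangent_space_S1_jets_subset:
  assumes x: "x \<in> sphere_product"
  shows "tangent_space (S1_jets sphere_product) (x, y, component_sum_jet_rows x) \<subseteq>
           J1_tangent x (component_sum_jet_rows x)"
proof -
  have "S1_jets sphere_product \<subseteq> J1 sphere_product"
    by (auto simp: S1_jets_def)
  then show ?thesis
    using tangent_space_mono tangent_space_J1[OF x component_sum_jet_rows_in_tangent[OF x]] by metis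
qed

lemma J1_tangent_subset_push_tangent_plus_S1_jets_tangent:
  fixes u :: "real^'d" and eps :: "'n::finite \<Rightarrow> real"
  assumes x_eq: "x = (\<chi> k. eps k *\<^sub>R u)" and u: "norm u = 1" and eps: "\<And>k. \<bar>eps k\<bar> = 1"
  shows "J1_tangent x (component_sum_jet_rows x) \<subseteq>
           {a + b | a b. a \<in> push_tangent (jet1 sphere_product component_sum) sphere_product x \<and>
              b \<in> tangent_space (S1_jets sphere_product) (x, component_sum x, component_sum_jet_rows x)}"
proof
  let ?A = "component_sum_jet_rows x"
  have x: "x \<in> sphere_product"
    using u eps by (simp add: x_eq sphere_product_def)
  have "u \<noteq> 0"
    using u by auto
  have "eps k * eps k = 1" for k
    using eps[of k] by (metis abs_mult_self_eq mult_1_right)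
  then have uA: "(\<Sum>i\<in>UNIV. u $ i *\<^sub>R ?A $ i) = 0"
    using u by (simp add: sum_scaleR_component_sum_jet_rows vec_eq_iff x_eq norm_eq_1)
  fix V assume "V \<in> J1_tangent x ?A"
  moreover obtain w y' B where V_eq: "V = (w, y', B)"
    by (cases V) auto
  ultimately have V: "(w, y', B) \<in> J1_tangent x ?A"
    by simp
  obtain v where v: "v \<in> sphere_product_tangent x"
    and contraction: "(\<Sum>i\<in>UNIV. u $ i *\<^sub>R (B - component_sum_jet_rows_deriv x v) $ i) = 0"
    using push_tangent_cancelling_contractionE[OF x_eq u eps V] by blast
  let ?a = "(v, component_sum v, component_sum_jet_rows_deriv x v)"
  let ?b = "(w - v, y' - component_sum v, B - component_sum_jet_rows_deriv x v)"
  have a: "?a \<in> push_tangent (jet1 sphere_product component_sum) sphere_product x"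
    by (rule push_tangent_jet1_component_sum[OF x v])
  have "(w, y', B) - ?a \<in> J1_tangent x ?A"
    using subspace_diff[OF subspace_J1_tangent V push_tangent_jet1_component_sum_subset[OF x, THEN subsetD, OF a]] .
  then have "?b \<in> J1_tangent x ?A"
    by simp
  then have "?b \<in> tangent_space (S1_jets sphere_product) (x, component_sum x, ?A)"
    by (rule J1_tangent_subset_S1_jets_tangent[OF x \<open>u \<noteq> 0\<close> uA _ contraction])
  moreover have "V = ?a + ?b"
    by (simp add: V_eq)
  ultimately show "V \<in> {a + b | a b. a \<in> push_tangent (jet1 sphere_product component_sum) sphere_product x \<and>
      b \<in> tangent_space (S1_jets sphere_product) (x, component_sum x, ?A)}"
    using a by blast
qed

lemma jet1_component_sum_transversal_S1_jets:
  fixes x :: "real^'d^'n"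
  assumes x: "x \<in> sphere_product"
    and S1: "jet1 sphere_product component_sum x \<in> S1_jets sphere_product"
  shows "{a + b | a b. a \<in> push_tangent (jet1 sphere_product component_sum) sphere_product x \<and>
            b \<in> tangent_space (S1_jets sphere_product) (jet1 sphere_product component_sum x)} =
           tangent_space (J1 sphere_product) (jet1 sphere_product component_sum x)"
proof -
  have "x \<in> Sk_set 1 sphere_product component_sum"
    using S1 x jet_corank_jet1_component_sum[OF x] by (simp add: S1_jets_def Sk_set_def)
  then obtain u eps where "x = (\<chi> k. eps k *\<^sub>R u)" "norm u = 1" "\<And>k. \<bar>eps k\<bar> = 1"
    unfolding Sk_set_1_component_sum by blast
  then have "J1_tangent x (component_sum_jet_rows x) \<subseteq>
      {a + b | a b. a \<in> push_tangent (jet1 sphere_product component_sum) sphere_product x \<and>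
         b \<in> tangent_space (S1_jets sphere_product) (x, component_sum x, component_sum_jet_rows x)}"
    by (rule J1_tangent_subset_push_tangent_plus_S1_jets_tangent)
  moreover have "{a + b | a b. a \<in> push_tangent (jet1 sphere_product component_sum) sphere_product x \<and>
      b \<in> tangent_space (S1_jets sphere_product) (x, component_sum x, component_sum_jet_rows x)} \<subseteq>
      J1_tangent x (component_sum_jet_rows x)"
    using push_tangent_jet1_component_sum_subset[OF x] tangent_space_S1_jets_subset[OF x]
      subspace_add[OF subspace_J1_tangent] by blast
  ultimately show ?thesis
    unfolding jet1_component_sum[OF x]
      tangent_space_J1[OF x component_sum_jet_rows_in_tangent[OF x]]
    by (rule subset_antisym[rotated])
qed

theorem mainTheorem2:
  assumes "CARD('d::finite) \<ge> 2" and "odd CARD('n::finite)"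
  shows "fold_map {v :: real^'d^'n. \<forall>i. norm (v$i) = 1} (\<lambda>v. \<Sum>i\<in>UNIV. v$i)"
proof -
  have X: "{v :: real^'d^'n. \<forall>i. norm (v$i) = 1} = sphere_product"
    by (simp add: sphere_product_def)
  show ?thesis
    unfolding X fold_map_def
    using sing_set_component_sum jet1_component_sum_transversal_S1_jets
      tangent_space_eq_fold_tangent_plus_kernel[OF assms(2)]
    by blast
qed

end
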